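(* Let $p$ be a prime, and let $H,H_1,\dots,H_r$ be subspaces of $\mathbb F_p^k$ with $H=H_1\cap\dots\cap H_r$. Then there exists $i\in[r]$ such that $\mu(H_i)\ge\mu(H)$.
   Context: For $x\in\mathbb F_p^k$, $|x|$ is the number of nonzero coordinates, and $V^\perp$ is the orthogonal complement under the standard dot product. For a proper subspace $H<\mathbb F_p^k$, \[ \mu(H)=\max_{W>H,\ \dim W=\dim H+1}\ \min_{v\in H^\perp\setminus W^\perp}|v|, \] and $\mu(\mathbb F_p^k)=0$. *)

theory Defs
  imports "HOL-Analysis.Analysis" "Berlekamp_Zassenhaus.Finite_Field"
begin

text \<open>Vectors of F_p^k are elements of type ('p mod_ring)^'n with k = CARD('n),
  where 'p :: prime_card, so CARD('p) = p is prime.\<close>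

definition hweight :: "'a::zero ^ 'n \<Rightarrow> nat" where
  "hweight x = card {i. x $ i \<noteq> 0}"

definition dotp :: "'a::comm_ring_1 ^ 'n \<Rightarrow> 'a ^ 'n \<Rightarrow> 'a" where
  "dotp x y = (\<Sum>i\<in>UNIV. x $ i * y $ i)"

definition orth :: "('a::comm_ring_1 ^ 'n) set \<Rightarrow> ('a ^ 'n) set" where
  "orth V = {v. \<forall>h\<in>V. dotp v h = 0}"

definition mu :: "('a::field ^ 'n::finite) set \<Rightarrow> nat" where
  "mu H = (if H = UNIV then 0 else
     Max ((\<lambda>W. Min (hweight ` (orth H - orth W)))
          ` {W. vec.subspace W \<and> H \<subset> W \<and> vec.dim W = vec.dim H + 1}))"

end

theory Submission
  imports Defs
begin

text \<open>Choose a cover \<open>W\<close> of \<open>H\<close> attaining \<open>\<mu>(H)\<close> and a vector \<open>w \<in> W - H\<close>; since \<open>H\<close> is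
  the intersection of the \<open>H\<^sub>i\<close>, some \<open>H\<^sub>i\<close> misses \<open>w\<close>. The cover \<open>W\<^sub>i = H\<^sub>i + \<langle>w\<rangle>\<close> of \<open>H\<^sub>i\<close>
  satisfies \<open>H\<^sub>i\<^sup>\<bottom> - W\<^sub>i\<^sup>\<bottom> = {u \<in> H\<^sub>i\<^sup>\<bottom>. u \<cdot> w \<noteq> 0} \<subseteq> H\<^sup>\<bottom> - W\<^sup>\<bottom>\<close>, and the left-hand side is
  nonempty, so the minimal weight over it is at least \<open>\<mu>(H)\<close>.\<close>

definition upper_covers :: "('a::field ^ 'n) set \<Rightarrow> ('a ^ 'n) set set" where
  "upper_covers H = {W. vec.subspace W \<and> H \<subset> W \<and> vec.dim W = vec.dim H + 1}"

definition min_weight :: "('a::field ^ 'n) set \<Rightarrow> ('a ^ 'n) set \<Rightarrow> nat" where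
  "min_weight H W = Min (hweight ` (orth H - orth W))"

lemma mu_eq_Max:
  "H \<noteq> UNIV \<Longrightarrow> mu H = Max (min_weight H ` upper_covers H)"
  by (simp add: mu_def min_weight_def upper_covers_def)

lemma orth_antimono: "A \<subseteq> B \<Longrightarrow> orth B \<subseteq> orth A"
  by (auto simp: orth_def)

lemma subspace_dotp_eq_0:
  fixes v :: "'a::field ^ 'n"
  shows "vec.subspace {x. dotp v x = 0}"
proof (rule vec.subspaceI)
  show "0 \<in> {x. dotp v x = 0}" by (simp add: dotp_def)
  show "x + y \<in> {x. dotp v x = 0}" if "x \<in> {x. dotp v x = 0}" "y \<in> {x. dotp v x = 0}" for x y
    using that by (simp add: dotp_def distrib_left sum.distrib)
  show "c *s x \<in> {x. dotp v x = 0}" if "x \<in> {x. dotp v x = 0}" for c x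
    using that by (simp add: dotp_def sum_distrib_left[symmetric] algebra_simps)
qed

lemma orth_span:
  fixes S :: "('a::field ^ 'n) set"
  shows "orth (vec.span S) = orth S"
proof
  show "orth (vec.span S) \<subseteq> orth S"
    by (rule orth_antimono[OF vec.span_superset])
  show "orth S \<subseteq> orth (vec.span S)"
  proof
    fix v assume "v \<in> orth S"
    then have "vec.span S \<subseteq> {x. dotp v x = 0}"
      by (intro vec.span_minimal subspace_dotp_eq_0) (auto simp: orth_def)
    then show "v \<in> orth (vec.span S)" by (auto simp: orth_def)
  qed
qed

lemma orth_diff_orth_span_insert:
  fixes K :: "('a::field ^ 'n) set"
  shows "orth K - orth (vec.span (insert w K)) = {u \<in> orth K. dotp u w \<noteq> 0}"
  unfolding orth_span by (auto simp: orth_def)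

lemma linear_component_eq_dotp:
  fixes f :: "'a::field ^ 'n \<Rightarrow> 'a ^ 'm"
  assumes "Vector_Spaces.linear (*s) (*s) f"
  shows "f x $ k = dotp (matrix f $ k) x"
  using arg_cong[where f="\<lambda>y. y $ k", OF matrix_works[OF assms, of x]]
  by (simp add: matrix_vector_mult_def dotp_def)

text \<open>The standard dot product is not an inner product over a finite field, so the
  separating functional is built by hand: a linear map killing a basis of \<open>K\<close> but not \<open>w\<close>.\<close>

lemma exists_orth_dotp_nonzero:
  fixes w :: "'a::field ^ 'n"
  assumes K: "vec.subspace K" and w: "w \<notin> K"
  obtains v where "v \<in> orth K" "dotp v w \<noteq> 0"
proof -
  obtain B where B: "B \<subseteq> K" "vec.independent B" "K \<subseteq> vec.span B"
    by (meson vec.basis_exists)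
  have span_B: "vec.span B = K"
    using B K by (simp add: vec.span_subspace)
  have indep: "vec.independent (insert w B)"
    using B(2) w span_B by (intro vec.independent_insertI) auto
  fix k :: 'n
  define f where "f = vec.construct (insert w B) (\<lambda>b. if b = w then axis k 1 else 0)"
  have lin: "Vector_Spaces.linear (*s) (*s) f"
    unfolding f_def by (rule vec.linear_construct[OF indep])
  have f_w: "f w = axis k 1"
    unfolding f_def by (simp add: vec.construct_basis[OF indep])
  have "f b = 0" if "b \<in> B" for b
    using that w B(1) unfolding f_def by (auto simp: vec.construct_basis[OF indep])
  then have "f h = 0" if "h \<in> K" for h
    using vec.linear_eq_0_on_span[OF lin] that span_B by blast
  then have "matrix f $ k \<in> orth K"
    by (simp add: orth_def linear_component_eq_dotp[OF lin, symmetric])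
  moreover have "dotp (matrix f $ k) w \<noteq> 0"
    by (simp add: linear_component_eq_dotp[OF lin, symmetric] f_w)
  ultimately show thesis by (rule that)
qed

lemma span_insert_in_upper_covers:
  fixes w :: "'a::field ^ 'n"
  assumes "vec.subspace K" "w \<notin> K"
  shows "vec.span (insert w K) \<in> upper_covers K"
proof -
  have "vec.dim (vec.span (insert w K)) = vec.dim K + 1"
    using assms by (simp add: vec.dim_insert vec.span_eq_iff[THEN iffD2, OF assms(1)])
  moreover have "K \<subset> vec.span (insert w K)"
    using assms(2) vec.span_superset[of "insert w K"] by blast
  ultimately show ?thesis by (simp add: upper_covers_def vec.subspace_span)
qed

lemma min_weight_le_mu:
  fixes K :: "('a::{field,finite} ^ 'n) set"
  assumes "W \<in> upper_covers K"
  shows "min_weight K W \<le> mu K"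
proof -
  have "K \<noteq> UNIV" using assms by (auto simp: upper_covers_def)
  then show ?thesis
    using assms by (simp add: mu_eq_Max)
qed

lemma mu_attained:
  fixes H :: "('a::{field,finite} ^ 'n) set"
  assumes "vec.subspace H" "H \<noteq> UNIV"
  obtains W where "W \<in> upper_covers H" "mu H = min_weight H W"
proof -
  obtain x where "x \<notin> H" using assms(2) by blast
  then have "upper_covers H \<noteq> {}"
    using span_insert_in_upper_covers[OF assms(1)] by blast
  then have "Max (min_weight H ` upper_covers H) \<in> min_weight H ` upper_covers H"
    by (intro Max_in) auto
  then show thesis using that assms(2) by (auto simp: mu_eq_Max)
qed

lemma min_weight_le_min_weight_span_insert:
  fixes K :: "('a::field ^ 'n) set"
  assumes K: "vec.subspace K" "w \<notin> K" and "H \<subseteq> K" "w \<in> W"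
  shows "min_weight H W \<le> min_weight K (vec.span (insert w K))"
proof -
  let ?D = "{u \<in> orth K. dotp u w \<noteq> 0}"
  have "?D \<subseteq> orth H - orth W"
    using orth_antimono[OF \<open>H \<subseteq> K\<close>] \<open>w \<in> W\<close> by (auto simp: orth_def)
  moreover obtain v where "v \<in> ?D"
    using exists_orth_dotp_nonzero[OF K] by blast
  moreover have "finite (hweight ` (orth H - orth W))"
    by (rule finite_subset[of _ "{..CARD('n)}"]) (auto simp: hweight_def card_mono)
  ultimately show ?thesis
    unfolding min_weight_def orth_diff_orth_span_insert by (intro Min_antimono) auto
qed

theorem lemma6p17:
  fixes H :: "('p::prime_card mod_ring ^ 'n::finite) set"
    and Hs :: "nat \<Rightarrow> ('p mod_ring ^ 'n) set"
    and r :: nat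
  assumes "r \<ge> 1"
    and "vec.subspace H"
    and "\<And>i. i \<in> {1..r} \<Longrightarrow> vec.subspace (Hs i)"
    and "H = (\<Inter>i\<in>{1..r}. Hs i)"
  shows "\<exists>i\<in>{1..r}. mu (Hs i) \<ge> mu H"
proof (cases "H = UNIV")
  case True
  then show ?thesis using assms(1) by (auto simp: mu_def)
next
  case False
  then obtain W where W: "W \<in> upper_covers H" "mu H = min_weight H W"
    using mu_attained[OF assms(2)] by blast
  then obtain w where "w \<in> W" "w \<notin> H" by (auto simp: upper_covers_def)
  then obtain i where i: "i \<in> {1..r}" "w \<notin> Hs i" using assms(4) by blast
  have Hs_i: "vec.subspace (Hs i)" using assms(3)[OF i(1)] .
  have "mu H \<le> min_weight (Hs i) (vec.span (insert w (Hs i)))"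
    unfolding W(2) using Hs_i i assms(4) \<open>w \<in> W\<close>
    by (intro min_weight_le_min_weight_span_insert) auto
  also have "\<dots> \<le> mu (Hs i)"
    by (intro min_weight_le_mu span_insert_in_upper_covers Hs_i i(2))
  finally show ?thesis using i(1) by blast
qed

end
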